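(* Let $k\ge2$ and let $G,H$ be graphs. Let $u,v$ be vertices belonging to the same $2$-connected component of $G$, and let $u',v'$ be vertices of $H$ that are not contained in a common $2$-connected component of $H$. Then $\chi^k_G(u,v)\ne\chi^k_H(u',v')$.
   Context: Graphs are finite, simple, undirected (possibly vertex- or arc-colored; uncolored graphs are monochromatic). A graph is $2$-connected if it has more than $2$ vertices and removing any single vertex leaves it connected. A $2$-connected component of $G$ is an inclusion-maximal set $S'\subseteq V(G)$ such that $G[S']$ is $2$-connected. For $k\ge2$, the $k$-dimensional Weisfeiler–Leman algorithm computes a coloring of $V(G)^k$: the initial color of a tuple consists of its input color and the isomorphism type of the ordered induced subgraph on its entries; in each round the new color of $\bar v$ is the pair of its old color and the multiset, over $w\in V(G)$, of the $k$-tuples whose $i$-th component is the old color of $\bar v$ with its $i$-th entry replaced by $w$; the stable coloring is $\chi^k_G$, with canonical colors comparable across graphs. For $\ell<k$, $\chi^k_G(u_1,\dots,u_\ell):=\chi^k_G(u_1,\dots,u_\ell,u_\ell,\dots,u_\ell)$ (last entry repeated $k-\ell$ times). *)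

theory Defs
  imports Main "HOL-Library.Multiset"
begin

text \<open>Finite simple undirected graphs with vertex colours and arc colours
  (colours on ordered pairs of adjacent vertices). Uncoloured graphs are
  those with constant colour functions.\<close>

record ('a, 'c) cgraph =
  verts :: "'a set"
  adj   :: "'a \<Rightarrow> 'a \<Rightarrow> bool"
  vcol  :: "'a \<Rightarrow> 'c"
  acol  :: "'a \<Rightarrow> 'a \<Rightarrow> 'c"

definition wf_graph :: "('a, 'c, 'z) cgraph_scheme \<Rightarrow> bool" where
  "wf_graph G \<longleftrightarrow> finite (verts G)
     \<and> (\<forall>x y. adj G x y \<longrightarrow> x \<in> verts G \<and> y \<in> verts G)
     \<and> (\<forall>x y. adj G x y \<longrightarrow> adj G y x)
     \<and> (\<forall>x. \<not> adj G x x)"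

definition edges_on :: "('a, 'c, 'z) cgraph_scheme \<Rightarrow> 'a set \<Rightarrow> ('a \<times> 'a) set" where
  "edges_on G S = {(x, y). x \<in> S \<and> y \<in> S \<and> adj G x y}"

definition connected_on :: "('a, 'c, 'z) cgraph_scheme \<Rightarrow> 'a set \<Rightarrow> bool" where
  "connected_on G S \<longleftrightarrow> (\<forall>x\<in>S. \<forall>y\<in>S. (x, y) \<in> (edges_on G S)\<^sup>*)"

definition two_connected_on :: "('a, 'c, 'z) cgraph_scheme \<Rightarrow> 'a set \<Rightarrow> bool" where
  "two_connected_on G S \<longleftrightarrow> card S > 2 \<and> (\<forall>x\<in>S. connected_on G (S - {x}))"

definition is_2cc :: "('a, 'c, 'z) cgraph_scheme \<Rightarrow> 'a set \<Rightarrow> bool" where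
  "is_2cc G S \<longleftrightarrow> S \<subseteq> verts G \<and> two_connected_on G S
     \<and> (\<forall>T. S \<subseteq> T \<and> T \<subseteq> verts G \<and> two_connected_on G T \<longrightarrow> T = S)"

text \<open>Canonical colours, comparable across graphs: an initial (atomic) colour,
  or a refined colour consisting of the old colour and a multiset of k-tuples
  (lists) of old colours.\<close>
datatype 'c wlcol =
    Init "'c list \<times> (bool \<times> bool \<times> 'c option) list list"
  | Refine "'c wlcol" "'c wlcol list multiset"

text \<open>Initial colour of a tuple: input (vertex) colours of the entries and the
  ordered isomorphism type of the induced subgraph (equalities, adjacencies and
  arc colours).\<close>
definition atp :: "('a, 'c, 'z) cgraph_scheme \<Rightarrow> 'a list \<Rightarrow> 'c list \<times> (bool \<times> bool \<times> 'c option) list list" where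
  "atp G t = (map (vcol G) t,
     map (\<lambda>x. map (\<lambda>y. (x = y, adj G x y, if adj G x y then Some (acol G x y) else None)) t) t)"

primrec wl_col :: "('a, 'c, 'z) cgraph_scheme \<Rightarrow> nat \<Rightarrow> nat \<Rightarrow> 'a list \<Rightarrow> 'c wlcol" where
  "wl_col G k 0 = (\<lambda>t. Init (atp G t))"
| "wl_col G k (Suc r) = (\<lambda>t. Refine (wl_col G k r t)
      (image_mset (\<lambda>w. map (\<lambda>i. wl_col G k r (t[i := w])) [0..<k]) (mset_set (verts G))))"

text \<open>Stable colour: the whole sequence of iterated colours (two tuples have the
  same stable colour iff they have the same colour after every round).\<close>
definition wl_stable :: "('a, 'c, 'z) cgraph_scheme \<Rightarrow> nat \<Rightarrow> 'a list \<Rightarrow> nat \<Rightarrow> 'c wlcol" where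
  "wl_stable G k t = (\<lambda>r. wl_col G k r t)"

definition wl_pair :: "('a, 'c, 'z) cgraph_scheme \<Rightarrow> nat \<Rightarrow> 'a \<Rightarrow> 'a \<Rightarrow> nat \<Rightarrow> 'c wlcol" where
  "wl_pair G k u v = wl_stable G k (u # replicate (k - 1) v)"

end

(*
  Both k-WL colourings record, for every pair of pebbled vertices x, y, the number of walks of
  each length from x to y, and (being stable) allow every single-pebble move in one graph to be
  answered in the other. Splitting walks at their first visit of z gives, for the generating
  functions W, the identity W(x,y) W(z,z) = W_z(x,y) W(z,z) + W(x,z) W(z,y), where W_z counts walks
  avoiding z; as W(z,z) is invertible, walks avoiding a pebbled vertex z are counted by the colours
  too. Hence the facts that u, v of a 2-connected set are joined, are not separated by any third
  vertex, and (if adjacent) are joined by a second route, carry over from u, v to u', v'. These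
  three facts put u', v' into a common 2-connected set, grown along a path by adding ears.
*)
theory Submission
  imports Defs "HOL-Computational_Algebra.Formal_Power_Series" "HOL-Library.Transitive_Closure_Table"
begin

primrec walks_avoiding :: "('a, 'c, 'z) cgraph_scheme \<Rightarrow> 'a set \<Rightarrow> nat \<Rightarrow> 'a \<Rightarrow> 'a \<Rightarrow> nat" where
  "walks_avoiding X Z 0 a b = (if a = b \<and> a \<notin> Z then 1 else 0)"
| "walks_avoiding X Z (Suc n) a b =
     (if a \<in> Z then 0 else (\<Sum>w\<in>verts X. if adj X a w then walks_avoiding X Z n w b else 0))"

primrec first_passage_walks :: "('a, 'c, 'z) cgraph_scheme \<Rightarrow> 'a \<Rightarrow> nat \<Rightarrow> 'a \<Rightarrow> nat" where
  "first_passage_walks X z 0 a = (if a = z then 1 else 0)"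
| "first_passage_walks X z (Suc n) a =
     (if a = z then 0 else (\<Sum>w\<in>verts X. if adj X a w then first_passage_walks X z n w else 0))"

lemma walks_avoiding_split_first_visit:
  "walks_avoiding X {} n a b = walks_avoiding X {z} n a b
     + (\<Sum>i\<le>n. first_passage_walks X z i a * walks_avoiding X {} (n - i) z b)"
proof (induction n arbitrary: a)
  case 0
  then show ?case by auto
next
  case (Suc n)
  show ?case
  proof (cases "a = z")
    case True
    have "(\<Sum>i\<le>Suc n. first_passage_walks X z i a * walks_avoiding X {} (Suc n - i) z b)
        = first_passage_walks X z 0 a * walks_avoiding X {} (Suc n) z b
          + (\<Sum>i\<le>n. first_passage_walks X z (Suc i) a * walks_avoiding X {} (n - i) z b)"
      by (subst sum.atMost_Suc_shift) simp
    also have "\<dots> = walks_avoiding X {} (Suc n) a b" using True by simp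
    finally show ?thesis using True by simp
  next
    case False
    let ?F = "\<lambda>i w. if adj X a w then first_passage_walks X z i w else 0"
    have "walks_avoiding X {} (Suc n) a b = (\<Sum>w\<in>verts X. if adj X a w then walks_avoiding X {z} n w b
        + (\<Sum>i\<le>n. first_passage_walks X z i w * walks_avoiding X {} (n - i) z b) else 0)"
      by (simp add: Suc.IH cong: if_cong)
    also have "\<dots> = (\<Sum>w\<in>verts X. if adj X a w then walks_avoiding X {z} n w b else 0)
        + (\<Sum>w\<in>verts X. \<Sum>i\<le>n. ?F i w * walks_avoiding X {} (n - i) z b)"
      by (auto simp: sum.distrib[symmetric] sum_distrib_left intro!: sum.cong)
    also have "(\<Sum>w\<in>verts X. \<Sum>i\<le>n. ?F i w * walks_avoiding X {} (n - i) z b)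
        = (\<Sum>i\<le>n. first_passage_walks X z (Suc i) a * walks_avoiding X {} (Suc n - Suc i) z b)"
      using False by (subst sum.swap) (simp add: sum_distrib_right)
    also have "\<dots> = (\<Sum>i\<le>Suc n. first_passage_walks X z i a * walks_avoiding X {} (Suc n - i) z b)"
      using False by (simp only: sum.atMost_Suc_shift) simp
    finally show ?thesis using False by simp
  qed
qed

lemma walks_avoiding_from_avoided: "a \<in> Z \<Longrightarrow> walks_avoiding X Z n a b = 0"
  by (cases n) simp_all

lemma walks_avoiding_to_avoided: "b \<in> Z \<Longrightarrow> walks_avoiding X Z n a b = 0"
  by (induction n arbitrary: a) (simp_all cong: if_cong)

definition walk_fps :: "('a, 'c, 'z) cgraph_scheme \<Rightarrow> 'a set \<Rightarrow> 'a \<Rightarrow> 'a \<Rightarrow> int fps" where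
  "walk_fps X Z a b = Abs_fps (\<lambda>n. int (walks_avoiding X Z n a b))"

definition first_passage_fps :: "('a, 'c, 'z) cgraph_scheme \<Rightarrow> 'a \<Rightarrow> 'a \<Rightarrow> int fps" where
  "first_passage_fps X z a = Abs_fps (\<lambda>n. int (first_passage_walks X z n a))"

lemma walk_fps_eq_iff: "walk_fps X Z a b = walk_fps Y Z' a' b'
    \<longleftrightarrow> (\<forall>n. walks_avoiding X Z n a b = walks_avoiding Y Z' n a' b')"
  by (simp add: walk_fps_def fps_eq_iff)

lemma walk_fps_split_first_visit:
  "walk_fps X {} a b = walk_fps X {z} a b + first_passage_fps X z a * walk_fps X {} z b"
  by (rule fps_ext)
    (simp add: walk_fps_def first_passage_fps_def fps_mult_nth atLeast0AtMost
      walks_avoiding_split_first_visit[of X n a b z for n])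

lemma walk_fps_ending_at: "walk_fps X {} a z = first_passage_fps X z a * walk_fps X {} z z"
  using walk_fps_split_first_visit[of X a z z]
  by (simp add: walk_fps_def walks_avoiding_to_avoided fps_zero_def)

lemma walk_fps_avoiding_identity:
  "walk_fps X {} x y * walk_fps X {} z z
     = walk_fps X {z} x y * walk_fps X {} z z + walk_fps X {} x z * walk_fps X {} z y"
  by (subst walk_fps_split_first_visit[of X x y z], subst walk_fps_ending_at[of X x z])
    (simp add: algebra_simps)

lemma walk_fps_closed_nonzero: "walk_fps X {} z z \<noteq> 0"
proof
  assume "walk_fps X {} z z = 0"
  then have "fps_nth (walk_fps X {} z z) 0 = 0" by simp
  then show False by (simp add: walk_fps_def)
qed

lemma walks_avoiding_determined:
  assumes "\<And>n. walks_avoiding X {} n x y = walks_avoiding Y {} n x' y'"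
    and "\<And>n. walks_avoiding X {} n z z = walks_avoiding Y {} n z' z'"
    and "\<And>n. walks_avoiding X {} n x z = walks_avoiding Y {} n x' z'"
    and "\<And>n. walks_avoiding X {} n z y = walks_avoiding Y {} n z' y'"
  shows "walks_avoiding X {z} n x y = walks_avoiding Y {z'} n x' y'"
proof -
  have xy: "walk_fps X {} x y = walk_fps Y {} x' y'" and zz: "walk_fps X {} z z = walk_fps Y {} z' z'"
    and xz: "walk_fps X {} x z = walk_fps Y {} x' z'" and zy: "walk_fps X {} z y = walk_fps Y {} z' y'"
    using assms by (simp_all add: walk_fps_eq_iff)
  have "walk_fps X {z} x y * walk_fps X {} z z
      = walk_fps X {} x y * walk_fps X {} z z - walk_fps X {} x z * walk_fps X {} z y"
    using walk_fps_avoiding_identity[of X x y z] by (simp add: algebra_simps)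
  also have "\<dots> = walk_fps Y {} x' y' * walk_fps Y {} z' z' - walk_fps Y {} x' z' * walk_fps Y {} z' y'"
    using xy zz xz zy by simp
  also have "\<dots> = walk_fps Y {z'} x' y' * walk_fps X {} z z"
    using walk_fps_avoiding_identity[of Y x' y' z'] zz by (simp add: algebra_simps)
  finally have "walk_fps X {z} x y = walk_fps Y {z'} x' y'"
    using walk_fps_closed_nonzero[of X z] by simp
  then show ?thesis by (simp add: walk_fps_eq_iff)
qed

lemma rtrancl_edges_on_imp_walks:
  assumes wf: "wf_graph X" and b: "b \<notin> Z"
    and "(a, b) \<in> (edges_on X (verts X - Z))\<^sup>*"
  shows "\<exists>n. walks_avoiding X Z n a b > 0"
  using assms(3)
proof (induction rule: converse_rtrancl_induct)
  case base
  show ?case using b by (intro exI[of _ 0]) simp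
next
  case (step a c)
  then obtain n where n: "walks_avoiding X Z n c b > 0" by auto
  have ac: "a \<in> verts X - Z" "c \<in> verts X" "adj X a c" using step(1) by (auto simp: edges_on_def)
  have "(if adj X a c then walks_avoiding X Z n c b else 0)
      \<le> (\<Sum>w\<in>verts X. if adj X a w then walks_avoiding X Z n w b else 0)"
    using wf ac by (intro member_le_sum) (auto simp: wf_graph_def)
  then have "walks_avoiding X Z (Suc n) a b > 0" using ac n by auto
  then show ?case by blast
qed

lemma walks_imp_rtrancl_edges_on:
  assumes wf: "wf_graph X"
  shows "walks_avoiding X Z n a b > 0 \<Longrightarrow> (a, b) \<in> (edges_on X (verts X - Z))\<^sup>*"
proof (induction n arbitrary: a)
  case 0
  then show ?case by (auto split: if_splits)
next
  case (Suc n)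
  then have "a \<notin> Z" and sum: "(\<Sum>w\<in>verts X. if adj X a w then walks_avoiding X Z n w b else 0) \<noteq> 0"
    by (auto split: if_splits)
  from sum obtain w where "w \<in> verts X" "(if adj X a w then walks_avoiding X Z n w b else 0) \<noteq> 0"
    by (rule sum.not_neutral_contains_not_neutral)
  with \<open>a \<notin> Z\<close> have w: "w \<in> verts X" "adj X a w" "walks_avoiding X Z n w b > 0" "a \<notin> Z"
    by (auto split: if_splits)
  have "(a, w) \<in> edges_on X (verts X - Z)"
    using w wf walks_avoiding_from_avoided[of w Z X n b] by (auto simp: edges_on_def wf_graph_def)
  then show ?case using Suc.IH[OF w(3)] by (rule converse_rtrancl_into_rtrancl)
qed

lemma rtrancl_edges_on_transfer:
  assumes "wf_graph G" "wf_graph H" "b \<notin> Z"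
    and "\<And>n. walks_avoiding G Z n a b = walks_avoiding H Z' n a' b'"
    and "(a, b) \<in> (edges_on G (verts G - Z))\<^sup>*"
  shows "(a', b') \<in> (edges_on H (verts H - Z'))\<^sup>*"
proof -
  obtain n where "walks_avoiding G Z n a b > 0" using rtrancl_edges_on_imp_walks[OF assms(1,3,5)] by blast
  then show ?thesis using walks_imp_rtrancl_edges_on[OF assms(2)] assms(4) by simp
qed

lemma rtrancl_edges_on_avoiding_transfer:
  assumes "wf_graph G" "wf_graph H" "y \<noteq> z"
    and "\<And>n. walks_avoiding G {} n x y = walks_avoiding H {} n x' y'"
    and "\<And>n. walks_avoiding G {} n z z = walks_avoiding H {} n z' z'"
    and "\<And>n. walks_avoiding G {} n x z = walks_avoiding H {} n x' z'"
    and "\<And>n. walks_avoiding G {} n z y = walks_avoiding H {} n z' y'"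
    and "(x, y) \<in> (edges_on G (verts G - {z}))\<^sup>*"
  shows "(x', y') \<in> (edges_on H (verts H - {z'}))\<^sup>*"
  using rtrancl_edges_on_transfer[OF assms(1,2) _ walks_avoiding_determined[OF assms(4-7)] assms(8)] assms(3)
  by simp

lemma wl_col_eq_le:
  "wl_col G k r s = wl_col H k r s' \<Longrightarrow> r' \<le> r \<Longrightarrow> wl_col G k r' s = wl_col H k r' s'"
proof (induction r)
  case (Suc r)
  then show ?case by (cases "r' = Suc r") (auto simp: le_Suc_eq)
qed simp

lemma atp_eqD:
  assumes "atp G s = atp H s'" "i < length s" "j < length s"
  shows "s ! i = s ! j \<longleftrightarrow> s' ! i = s' ! j" and "adj G (s ! i) (s ! j) \<longleftrightarrow> adj H (s' ! i) (s' ! j)"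
proof -
  have "length s' = length s"
    using arg_cong[OF assms(1), of "\<lambda>p. length (fst p)"] by (simp add: atp_def)
  moreover have "snd (atp G s) ! i ! j = snd (atp H s') ! i ! j" using assms(1) by simp
  ultimately show "s ! i = s ! j \<longleftrightarrow> s' ! i = s' ! j" and "adj G (s ! i) (s ! j) \<longleftrightarrow> adj H (s' ! i) (s' ! j)"
    using assms(2,3) by (simp_all add: atp_def)
qed

lemma sum_mset_image_mset_cong:
  assumes "image_mset f A = image_mset f' B"
    and "\<And>a b. a \<in># A \<Longrightarrow> b \<in># B \<Longrightarrow> f a = f' b \<Longrightarrow> g a = g' b"
  shows "sum_mset (image_mset g A) = sum_mset (image_mset g' B)"
  using assms
proof (induction A arbitrary: B)
  case (add a A)
  have "f a \<in># image_mset f' B" using add.prems(1) by (metis image_mset_add_mset union_single_eq_member)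
  then obtain b where b: "b \<in># B" "f' b = f a" by auto
  then have B: "B = add_mset b (B - {#b#})" by simp
  have "image_mset f A = image_mset f' (B - {#b#})"
    using add.prems(1) B b(2) by (metis add_mset_remove_trivial image_mset_add_mset)
  then have "sum_mset (image_mset g A) = sum_mset (image_mset g' (B - {#b#}))"
    using add.prems(2) by (intro add.IH) (auto dest: in_diffD)
  moreover have "g a = g' b" using add.prems(2) b by auto
  ultimately show ?case by (subst B) simp
qed simp

text \<open>Walks from \<open>s ! i\<close> are counted by their second vertex \<open>w\<close>: the refined colour records,
  for each \<open>w\<close>, the colours of \<open>s[i := w]\<close> (walks from \<open>w\<close>, by induction) and of \<open>s[j := w]\<close>
  (whether \<open>s ! i\<close> and \<open>w\<close> are adjacent).\<close>
lemma wl_col_eq_walks: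
  assumes "i < k" "j < k" "i \<noteq> j"
  shows "length s = k \<Longrightarrow> length s' = k \<Longrightarrow> wl_col G k r s = wl_col H k r s' \<Longrightarrow> n \<le> r
    \<Longrightarrow> walks_avoiding G {} n (s ! i) (s ! j) = walks_avoiding H {} n (s' ! i) (s' ! j)"
proof (induction n arbitrary: r s s')
  case 0
  then have "atp G s = atp H s'" using wl_col_eq_le[of G k r s H s' 0] by simp
  then have "s ! i = s ! j \<longleftrightarrow> s' ! i = s' ! j" using atp_eqD(1) assms 0 by metis
  then show ?case by simp
next
  case (Suc n)
  then obtain r0 where r: "r = Suc r0" and nr: "n \<le> r0" by (cases r) auto
  let ?col = "\<lambda>X t w. map (\<lambda>l. wl_col X k r0 (t[l := w])) [0..<k]"
  let ?step = "\<lambda>X t w. if adj X (t ! i) w then walks_avoiding X {} n w (t ! j) else 0"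
  have M: "image_mset (?col G s) (mset_set (verts G)) = image_mset (?col H s') (mset_set (verts H))"
    using Suc.prems(3) r by simp
  have "sum_mset (image_mset (?step G s) (mset_set (verts G)))
      = sum_mset (image_mset (?step H s') (mset_set (verts H)))"
  proof (rule sum_mset_image_mset_cong[OF M])
    fix w w' assume cols: "?col G s w = ?col H s' w'"
    have ci: "wl_col G k r0 (s[i := w]) = wl_col H k r0 (s'[i := w'])"
      and cj: "wl_col G k r0 (s[j := w]) = wl_col H k r0 (s'[j := w'])"
      using arg_cong[OF cols, of "\<lambda>l. l ! i"] arg_cong[OF cols, of "\<lambda>l. l ! j"] assms by simp_all
    have "walks_avoiding G {} n w (s ! j) = walks_avoiding H {} n w' (s' ! j)"
      using Suc.IH[OF _ _ ci nr] Suc.prems assms by simp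
    moreover have "adj G (s ! i) w \<longleftrightarrow> adj H (s' ! i) w'"
      using atp_eqD(2)[of G "s[j := w]" H "s'[j := w']" i j] wl_col_eq_le[OF cj, of 0] Suc.prems assms
      by simp
    ultimately show "?step G s w = ?step H s' w'" by simp
  qed
  then show ?case by (simp add: sum_unfold_sum_mset)
qed

definition wl_equivalent :: "('a, 'c, 'z) cgraph_scheme \<Rightarrow> ('b, 'c, 'y) cgraph_scheme \<Rightarrow> nat
    \<Rightarrow> 'a list \<Rightarrow> 'b list \<Rightarrow> bool" where
  "wl_equivalent G H k s s' \<longleftrightarrow> length s = k \<and> length s' = k \<and> wl_stable G k s = wl_stable H k s'"

lemma wl_equivalent_wl_col: "wl_equivalent G H k s s' \<Longrightarrow> wl_col G k r s = wl_col H k r s'"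
  by (simp add: wl_equivalent_def wl_stable_def fun_eq_iff)

lemma wl_equivalent_sym: "wl_equivalent G H k s s' \<Longrightarrow> wl_equivalent H G k s' s"
  by (simp add: wl_equivalent_def)

lemma wl_equivalent_eq_iff:
  "wl_equivalent G H k s s' \<Longrightarrow> i < k \<Longrightarrow> j < k \<Longrightarrow> s ! i = s ! j \<longleftrightarrow> s' ! i = s' ! j"
  using atp_eqD(1)[of G s H s' i j] wl_equivalent_wl_col[of G H k s s' 0]
  by (simp add: wl_equivalent_def)

lemma wl_equivalent_adj_iff:
  "wl_equivalent G H k s s' \<Longrightarrow> i < k \<Longrightarrow> j < k \<Longrightarrow> adj G (s ! i) (s ! j) \<longleftrightarrow> adj H (s' ! i) (s' ! j)"
  using atp_eqD(2)[of G s H s' i j] wl_equivalent_wl_col[of G H k s s' 0]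
  by (simp add: wl_equivalent_def)

lemma wl_equivalent_walks:
  "wl_equivalent G H k s s' \<Longrightarrow> i < k \<Longrightarrow> j < k \<Longrightarrow> i \<noteq> j
    \<Longrightarrow> walks_avoiding G {} n (s ! i) (s ! j) = walks_avoiding H {} n (s' ! i) (s' ! j)"
  using wl_col_eq_walks[of i k j s s' G n H n] wl_equivalent_wl_col[of G H k s s' n]
  by (simp add: wl_equivalent_def)

text \<open>Each round gives a partner for \<open>w'\<close>, and since the rounds only refine, a partner in
  the latest round among finitely many candidates works for all rounds.\<close>
lemma wl_equivalent_back:
  assumes "finite (verts G)" "finite (verts H)" "wl_equivalent G H k s s'" "w' \<in> verts H"
  shows "\<exists>w\<in>verts G. \<forall>i<k. wl_equivalent G H k (s[i := w]) (s'[i := w'])"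
proof -
  define P where "P r w \<longleftrightarrow> (\<forall>i<k. wl_col G k r (s[i := w]) = wl_col H k r (s'[i := w']))" for r w
  have ex: "\<exists>w\<in>verts G. P r w" for r
  proof -
    let ?col = "\<lambda>X t w. map (\<lambda>i. wl_col X k r (t[i := w])) [0..<k]"
    have "image_mset (?col G s) (mset_set (verts G)) = image_mset (?col H s') (mset_set (verts H))"
      using wl_equivalent_wl_col[OF assms(3), of "Suc r"] by simp
    moreover have "?col H s' w' \<in># image_mset (?col H s') (mset_set (verts H))"
      using assms(2,4) by (simp add: image_iff) blast
    ultimately have "?col H s' w' \<in># image_mset (?col G s) (mset_set (verts G))" by simp
    then obtain w where w: "w \<in> verts G" "?col G s w = ?col H s' w'" using assms(1) by auto
    have "P r w" unfolding P_def
    proof (intro allI impI)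
      fix i assume "i < k"
      then show "wl_col G k r (s[i := w]) = wl_col H k r (s'[i := w'])"
        using arg_cong[OF w(2), of "\<lambda>l. l ! i"] by simp
    qed
    then show ?thesis using w(1) by blast
  qed
  have "\<exists>w\<in>verts G. \<forall>r. P r w"
  proof (rule ccontr)
    assume "\<not> ?thesis"
    then obtain R where R: "\<And>w. w \<in> verts G \<Longrightarrow> \<not> P (R w) w" by metis
    obtain w where w: "w \<in> verts G" "P (Max (R ` verts G)) w" using ex by blast
    have "R w \<le> Max (R ` verts G)" using assms(1) w(1) by simp
    then have "P (R w) w" using w(2) wl_col_eq_le unfolding P_def by blast
    then show False using R w(1) by blast
  qed
  then show ?thesis
    using assms(3) unfolding P_def wl_equivalent_def wl_stable_def by (auto simp: fun_eq_iff)
qed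

lemma wl_equivalent_forth:
  assumes "finite (verts G)" "finite (verts H)" "wl_equivalent G H k s s'" "w \<in> verts G"
  shows "\<exists>w'\<in>verts H. \<forall>i<k. wl_equivalent G H k (s[i := w]) (s'[i := w'])"
  using wl_equivalent_back[OF assms(2,1) wl_equivalent_sym[OF assms(3)] assms(4)]
  by (auto dest: wl_equivalent_sym)

text \<open>A second pebble placed on \<open>s ! i\<close> can only be answered by \<open>s' ! i\<close>.\<close>
lemma wl_equivalent_closed_walks:
  assumes "finite (verts G)" "finite (verts H)" "wl_equivalent G H k s s'"
    and "2 \<le> k" "i < k" "s ! i \<in> verts G"
  shows "walks_avoiding G {} n (s ! i) (s ! i) = walks_avoiding H {} n (s' ! i) (s' ! i)"
proof -
  define j :: nat where "j = (if i = 0 then 1 else 0)"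
  have j: "j < k" "j \<noteq> i" using assms(4,5) by (auto simp: j_def)
  obtain w' where e: "wl_equivalent G H k (s[j := s ! i]) (s'[j := w'])"
    using wl_equivalent_forth[OF assms(1-3,6)] j(1) by blast
  moreover have "w' = s' ! i"
    using wl_equivalent_eq_iff[OF e assms(5) j(1)] j assms(3,5) by (simp add: wl_equivalent_def)
  ultimately show ?thesis
    using wl_equivalent_walks[OF _ assms(5) j(1), of G H "s[j := s ! i]" "s'[j := w']" n] j assms(3,5)
    by (simp add: wl_equivalent_def)
qed

lemma wf_graph_finite: "wf_graph X \<Longrightarrow> finite (verts X)"
  by (simp add: wf_graph_def)

lemma rtrancl_edges_on_sym:
  "wf_graph X \<Longrightarrow> (a, b) \<in> (edges_on X A)\<^sup>* \<Longrightarrow> (b, a) \<in> (edges_on X A)\<^sup>*"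
  by (rule symD[OF sym_rtrancl]) (auto simp: sym_def edges_on_def wf_graph_def)

lemma rtrancl_edges_on_mono: "A \<subseteq> B \<Longrightarrow> (edges_on X A)\<^sup>* \<subseteq> (edges_on X B)\<^sup>*"
  by (rule rtrancl_mono) (auto simp: edges_on_def)

lemma walk_imp_rtrancl_edges_on:
  "successively (adj X) xs \<Longrightarrow> xs \<noteq> [] \<Longrightarrow> set xs \<subseteq> A \<Longrightarrow> (hd xs, last xs) \<in> (edges_on X A)\<^sup>*"
proof (induction xs rule: induct_list012)
  case (3 a b xs)
  then have "(a, b) \<in> edges_on X A" by (simp add: edges_on_def)
  with 3 show ?case by (auto intro: converse_rtrancl_into_rtrancl)
qed simp_all

lemma rtrancl_edges_on_imp_distinct_walk:
  assumes "(a, b) \<in> (edges_on X A)\<^sup>*" "a \<in> A"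
  obtains xs where "xs \<noteq> []" "hd xs = a" "last xs = b" "successively (adj X) xs" "set xs \<subseteq> A" "distinct xs"
proof -
  let ?R = "\<lambda>p q. (p, q) \<in> edges_on X A"
  have "?R\<^sup>*\<^sup>* a b" using assms(1) by (simp add: rtrancl_def)
  then obtain ps0 where "rtrancl_path ?R a ps0 b" by (auto simp: rtranclp_eq_rtrancl_path)
  then obtain ps where ps: "rtrancl_path ?R a ps b" "distinct (a # ps)"
    by (rule rtrancl_path_distinct)
  have "successively (adj X) (a # ps) \<and> last (a # ps) = b \<and> set (a # ps) \<subseteq> A"
    using ps(1) assms(2)
    by (induction rule: rtrancl_path.induct) (auto simp: successively_Cons edges_on_def)
  with ps(2) show ?thesis using that[of "a # ps"] by simp
qed

lemma successively_take: "successively P xs \<Longrightarrow> successively P (take n xs)"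
  using successively_append_iff[of P "take n xs" "drop n xs"] by simp

lemma successively_drop: "successively P xs \<Longrightarrow> successively P (drop n xs)"
  using successively_append_iff[of P "take n xs" "drop n xs"] by simp

lemma walk_prefix_rtrancl_edges_on:
  assumes "successively (adj X) W" "i < length W"
  shows "(hd W, W ! i) \<in> (edges_on X (set (take (Suc i) W)))\<^sup>*"
proof -
  have "hd (take (Suc i) W) = hd W" using assms(2) by (cases W) simp_all
  moreover have "last (take (Suc i) W) = W ! i" by (simp add: take_Suc_conv_app_nth[OF assms(2)])
  moreover have "(hd (take (Suc i) W), last (take (Suc i) W)) \<in> (edges_on X (set (take (Suc i) W)))\<^sup>*"
    using successively_take[OF assms(1)] assms(2) by (intro walk_imp_rtrancl_edges_on) auto
  ultimately show ?thesis by simp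
qed

lemma walk_suffix_rtrancl_edges_on:
  assumes "successively (adj X) W" "i < length W"
  shows "(W ! i, last W) \<in> (edges_on X (set (drop i W)))\<^sup>*"
proof -
  have "(hd (drop i W), last (drop i W)) \<in> (edges_on X (set (drop i W)))\<^sup>*"
    using successively_drop[OF assms(1)] assms(2) by (intro walk_imp_rtrancl_edges_on) auto
  then show ?thesis using assms(2) by (simp add: hd_drop_conv_nth)
qed

text \<open>A vertex occurs at most once on a path, so it cannot block both ends.\<close>
lemma distinct_walk_avoiding_prefix_or_suffix:
  assumes W: "successively (adj X) W" "distinct W" "i < length W" "W ! i \<noteq> c"
  shows "hd W \<noteq> c \<and> (hd W, W ! i) \<in> (edges_on X (set W - {c}))\<^sup>*
    \<or> last W \<noteq> c \<and> (W ! i, last W) \<in> (edges_on X (set W - {c}))\<^sup>*"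
proof (cases "c \<in> set (take (Suc i) W)")
  case False
  then have "set (take (Suc i) W) \<subseteq> set W - {c}" using set_take_subset by fast
  then have "(hd W, W ! i) \<in> (edges_on X (set W - {c}))\<^sup>*"
    using rtrancl_edges_on_mono walk_prefix_rtrancl_edges_on[OF W(1,3)] by blast
  moreover have "hd W \<in> set (take (Suc i) W)" using W(3) by (cases W) simp_all
  ultimately show ?thesis using False by auto
next
  case True
  then have "c \<in> set (take i W)" using W(3,4) by (simp add: take_Suc_conv_app_nth)
  then have "c \<notin> set (drop i W)" using set_take_disj_set_drop_if_distinct[OF W(2), of i i] by blast
  then have "set (drop i W) \<subseteq> set W - {c}" using set_drop_subset by fast
  then have "(W ! i, last W) \<in> (edges_on X (set W - {c}))\<^sup>*"
    using rtrancl_edges_on_mono walk_suffix_rtrancl_edges_on[OF W(1,3)] by blast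
  moreover have "last W \<in> set (drop i W)" using last_in_set[of "drop i W"] W(3) by simp
  ultimately show ?thesis using \<open>c \<notin> set (drop i W)\<close> by auto
qed

lemma connected_onI_hub:
  assumes wf: "wf_graph X" and B: "connected_on X B" "B \<subseteq> A" "B \<noteq> {}"
    and reach: "\<And>p. p \<in> A \<Longrightarrow> \<exists>b\<in>B. (p, b) \<in> (edges_on X A)\<^sup>*"
  shows "connected_on X A"
  unfolding connected_on_def
proof (intro ballI)
  fix p q assume "p \<in> A" "q \<in> A"
  then obtain b1 b2 where b: "b1 \<in> B" "(p, b1) \<in> (edges_on X A)\<^sup>*" "b2 \<in> B" "(q, b2) \<in> (edges_on X A)\<^sup>*"
    using reach by blast
  have "(b1, b2) \<in> (edges_on X B)\<^sup>*" using B(1) b by (simp add: connected_on_def)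
  then have "(b1, b2) \<in> (edges_on X A)\<^sup>*" using rtrancl_edges_on_mono[OF B(2)] by blast
  then show "(p, q) \<in> (edges_on X A)\<^sup>*"
    using b rtrancl_edges_on_sym[OF wf b(4)] by (meson rtrancl_trans)
qed

text \<open>2-connectivity without the size bound, so that a single edge qualifies: the seed of the
  ear decompositions below.\<close>
definition robustly_connected_on :: "('a, 'c, 'z) cgraph_scheme \<Rightarrow> 'a set \<Rightarrow> bool" where
  "robustly_connected_on X T \<longleftrightarrow> (\<forall>c. connected_on X (T - {c}))"

lemma robustly_connected_edge:
  assumes "wf_graph X" "adj X x y"
  shows "robustly_connected_on X {x, y}"
  unfolding robustly_connected_on_def
proof
  fix c
  have xy: "x \<noteq> y" "(x, y) \<in> edges_on X {x, y}" "(y, x) \<in> edges_on X {x, y}"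
    using assms by (auto simp: edges_on_def wf_graph_def)
  have single: "connected_on X {z}" for z by (simp add: connected_on_def)
  consider "c = x" | "c = y" | "c \<noteq> x" "c \<noteq> y" by blast
  then show "connected_on X ({x, y} - {c})"
  proof cases
    case 3
    then have "{x, y} - {c} = {x, y}" by blast
    with xy(2,3) show ?thesis by (auto simp: connected_on_def)
  qed (use xy(1) single in \<open>simp_all add: insert_Diff_if\<close>)
qed

lemma robustly_connected_add_ear:
  assumes wf: "wf_graph X" and T: "robustly_connected_on X T"
    and ab: "a \<in> T" "b \<in> T" "a \<noteq> b" and ps: "distinct ps" "set ps \<inter> T = {}"
    and walk: "successively (adj X) (a # ps @ [b])"
  shows "robustly_connected_on X (T \<union> set ps)"
  unfolding robustly_connected_on_def
proof
  fix c
  let ?W = "a # ps @ [b]" and ?A = "T \<union> set ps - {c}"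
  have W: "distinct ?W" "set ?W - {c} \<subseteq> ?A" using ab ps by auto
  show "connected_on X ?A"
  proof (rule connected_onI_hub[OF wf, of "T - {c}"])
    show "connected_on X (T - {c})" using T by (simp add: robustly_connected_on_def)
    show "T - {c} \<subseteq> ?A" "T - {c} \<noteq> {}" using ab by auto
    fix p assume p: "p \<in> ?A"
    show "\<exists>q\<in>T - {c}. (p, q) \<in> (edges_on X ?A)\<^sup>*"
    proof (cases "p \<in> T")
      case False
      with p have "p \<in> set ?W" by auto
      then obtain i where i: "i < length ?W" "?W ! i = p" using in_set_conv_nth[of p ?W] by blast
      have mono: "(edges_on X (set ?W - {c}))\<^sup>* \<subseteq> (edges_on X ?A)\<^sup>*"
        by (rule rtrancl_edges_on_mono[OF W(2)])
      from distinct_walk_avoiding_prefix_or_suffix[OF walk W(1) i(1)] i(2) p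
      consider "a \<noteq> c" "(a, p) \<in> (edges_on X ?A)\<^sup>*" | "b \<noteq> c" "(p, b) \<in> (edges_on X ?A)\<^sup>*"
        using mono by auto
      then show ?thesis
      proof cases
        case 1
        then show ?thesis using ab(1) rtrancl_edges_on_sym[OF wf 1(2)] by (intro bexI[of _ a]) simp_all
      next
        case 2
        then show ?thesis using ab(2) by (intro bexI[of _ b]) simp_all
      qed
    qed (use p in \<open>intro bexI[of _ p], simp_all\<close>)
  qed
qed

lemma robustly_connected_extend:
  assumes wf: "wf_graph X" and T: "robustly_connected_on X T" "T \<subseteq> verts X"
    and c: "c \<in> T" "adj X c d" and b: "b \<in> T" "b \<noteq> c"
    and reach: "(d, b) \<in> (edges_on X (verts X - {c}))\<^sup>*"
  obtains T' where "T \<subseteq> T'" "T' \<subseteq> verts X" "robustly_connected_on X T'" "d \<in> T'"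
proof (cases "d \<in> T")
  case True
  then show ?thesis using T by (intro that[of T]) auto
next
  case False
  have "d \<in> verts X - {c}" using c wf by (auto simp: wf_graph_def)
  then obtain qs where qs: "qs \<noteq> []" "hd qs = d" "last qs = b" "successively (adj X) qs"
      "set qs \<subseteq> verts X - {c}" "distinct qs"
    by (rule rtrancl_edges_on_imp_distinct_walk[OF reach])
  let ?ps = "takeWhile (\<lambda>v. v \<notin> T) qs" and ?rs = "dropWhile (\<lambda>v. v \<notin> T) qs"
  have qs_split: "qs = ?ps @ ?rs" by simp
  have "b \<in> set qs" using qs(1,3) last_in_set by blast
  then have rs: "?rs \<noteq> []" using b(1) by (auto simp: dropWhile_eq_Nil_conv)
  then have b': "hd ?rs \<in> T" using hd_dropWhile by blast
  have "hd ?rs \<in> set qs" using hd_in_set[OF rs] set_dropWhileD by fast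
  then have b'c: "hd ?rs \<noteq> c" using qs(5) by blast
  have ps: "?ps \<noteq> []" "hd ?ps = d" using qs(1,2) False by (cases qs; simp)+
  have "?ps @ [hd ?rs] = take (Suc (length ?ps)) qs"
    using rs by (subst (2) qs_split) (cases ?rs; simp)
  then have "successively (adj X) (?ps @ [hd ?rs])" using successively_take[OF qs(4)] by simp
  then have walk: "successively (adj X) (c # ?ps @ [hd ?rs])"
    using c(2) ps by (cases ?ps) (simp_all add: successively_Cons)
  have "robustly_connected_on X (T \<union> set ?ps)"
  proof (rule robustly_connected_add_ear[OF wf T(1) c(1) b' b'c[symmetric] _ _ walk])
    show "distinct ?ps" using qs(6) by (simp add: distinct_takeWhile)
    show "set ?ps \<inter> T = {}" by (auto dest: set_takeWhileD)
  qed
  moreover have "set ?ps \<subseteq> verts X" using qs(5) by (auto dest: set_takeWhileD)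
  moreover have "d \<in> set ?ps" using hd_in_set[OF ps(1)] ps(2) by simp
  ultimately show ?thesis using T(2) by (intro that[of "T \<union> set ?ps"]) auto
qed

lemma robustly_connected_superset_of_walk:
  assumes wf: "wf_graph X" and P: "successively (adj X) P" "distinct P" "set P \<subseteq> verts X" "2 \<le> length P"
    and no_cut: "\<And>j. 0 < j \<Longrightarrow> Suc j < length P
      \<Longrightarrow> (hd P, last P) \<in> (edges_on X (verts X - {P ! j}))\<^sup>*"
  obtains T where "T \<subseteq> verts X" "robustly_connected_on X T" "set P \<subseteq> T"
proof -
  have "\<exists>T \<subseteq> verts X. robustly_connected_on X T \<and> set (take m P) \<subseteq> T" if "2 \<le> m" "m \<le> length P" for m
    using that
  proof (induction m rule: nat_induct_at_least)
    case base
    have len: "0 < length P" "1 < length P" using P(4) by linarith+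
    have "take 2 P = [P ! 0, P ! 1]" using P(4) by (cases P; cases "tl P") auto
    moreover have "P ! 0 \<in> set P" "P ! 1 \<in> set P" using nth_mem[OF len(1)] nth_mem[OF len(2)] .
    moreover have "adj X (P ! 0) (P ! 1)" using successively_nth[OF P(1)] P(4) by simp
    ultimately show ?case
      using robustly_connected_edge[OF wf] P(3) by (intro exI[of _ "{P ! 0, P ! 1}"]) auto
  next
    case (Suc m)
    then obtain T where T: "T \<subseteq> verts X" "robustly_connected_on X T" "set (take m P) \<subseteq> T" by auto
    let ?c = "P ! (m - 1)" and ?d = "P ! m"
    have m: "0 < m - 1" "Suc (m - 1) = m" "m < length P" "P \<noteq> []" using Suc by auto
    have "take m P ! (m - 1) \<in> set (take m P)" "take m P ! 0 \<in> set (take m P)"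
      by (rule nth_mem, use m in simp)+
    then have c: "?c \<in> set (take m P)" and hd: "hd P \<in> T"
      using T(3) m by (simp_all add: hd_conv_nth subset_iff)
    have hd_c: "hd P \<noteq> ?c" using m P(2) by (simp add: hd_conv_nth nth_eq_iff_index_eq)
    have cd: "adj X ?c ?d" using successively_nth[OF P(1), of "m - 1"] m by simp
    have "?c \<notin> set (drop m P)" using set_take_disj_set_drop_if_distinct[OF P(2), of m m] c by blast
    then have "set (drop m P) \<subseteq> verts X - {?c}" using set_drop_subset[of m P] P(3) by blast
    then have "(?d, last P) \<in> (edges_on X (verts X - {?c}))\<^sup>*"
      using rtrancl_edges_on_mono walk_suffix_rtrancl_edges_on[OF P(1) m(3)] by blast
    moreover have "(last P, hd P) \<in> (edges_on X (verts X - {?c}))\<^sup>*"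
      using rtrancl_edges_on_sym[OF wf no_cut[OF m(1)]] m by simp
    ultimately have "(?d, hd P) \<in> (edges_on X (verts X - {?c}))\<^sup>*" by (rule rtrancl_trans)
    then obtain T' where T': "T \<subseteq> T'" "T' \<subseteq> verts X" "robustly_connected_on X T'" "?d \<in> T'"
      using robustly_connected_extend[OF wf T(2,1) _ cd hd hd_c] c T(3) by blast
    have "set (take (Suc m) P) = insert ?d (set (take m P))"
      using m by (simp add: take_Suc_conv_app_nth)
    then show ?case using T(3) T' by (intro exI[of _ T']) auto
  qed
  from this[of "length P"] show ?thesis using P(4) that by auto
qed

lemma robustly_connected_imp_two_connected:
  assumes "finite T" "robustly_connected_on X T" "{x, y, w} \<subseteq> T" "x \<noteq> y" "x \<noteq> w" "y \<noteq> w"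
  shows "two_connected_on X T"
proof -
  have "card {x, y, w} \<le> card T" using assms(1,3) by (rule card_mono)
  then show ?thesis using assms by (auto simp: two_connected_on_def robustly_connected_on_def)
qed

lemma robustly_connected_set_joining:
  assumes wf: "wf_graph X" and xy: "x \<noteq> y" "x \<in> verts X"
    and reach: "(x, y) \<in> (edges_on X (verts X))\<^sup>*"
    and no_cut: "\<And>z. z \<in> verts X \<Longrightarrow> z \<noteq> x \<Longrightarrow> z \<noteq> y \<Longrightarrow> (x, y) \<in> (edges_on X (verts X - {z}))\<^sup>*"
  obtains T where "T \<subseteq> verts X" "robustly_connected_on X T" "x \<in> T" "y \<in> T"
    "adj X x y \<or> (\<exists>w\<in>T. w \<noteq> x \<and> w \<noteq> y)"
proof -
  obtain P where P: "P \<noteq> []" "hd P = x" "last P = y" "successively (adj X) P" "set P \<subseteq> verts X" "distinct P"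
    using rtrancl_edges_on_imp_distinct_walk[OF reach xy(2)] by blast
  have ends: "P ! 0 = x" "P ! (length P - 1) = y" using P(1-3) by (simp_all add: hd_conv_nth last_conv_nth)
  have "length P \<noteq> 1" "length P \<noteq> 0" using ends xy(1) P(1) by auto
  then have len: "2 \<le> length P" by linarith
  have "(hd P, last P) \<in> (edges_on X (verts X - {P ! j}))\<^sup>*" if j: "0 < j" "Suc j < length P" for j
  proof -
    have "j < length P" "0 < length P" "length P - 1 < length P" "j \<noteq> 0" "j \<noteq> length P - 1"
      using j by auto
    then have "P ! j \<noteq> P ! 0" "P ! j \<noteq> P ! (length P - 1)"
      using nth_eq_iff_index_eq[OF P(6)] by blast+
    moreover have "P ! j \<in> verts X" using P(5) j by auto
    ultimately show ?thesis using no_cut ends P(2,3) by simp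
  qed
  then obtain T where T: "T \<subseteq> verts X" "robustly_connected_on X T" "set P \<subseteq> T"
    using robustly_connected_superset_of_walk[OF wf P(4,6,5) len] by blast
  have "adj X x y \<or> (\<exists>w\<in>T. w \<noteq> x \<and> w \<noteq> y)"
  proof (cases "length P = 2")
    case True
    then show ?thesis using successively_nth[OF P(4), of 0] ends by simp
  next
    case False
    then have "1 < length P" "length P - 1 < length P" "1 \<noteq> length P - 1" using len by auto
    then have "P ! 1 \<noteq> P ! 0" "P ! 1 \<noteq> P ! (length P - 1)"
      using P(1) nth_eq_iff_index_eq[OF P(6), of 1 0] nth_eq_iff_index_eq[OF P(6), of 1 "length P - 1"]
      by auto
    moreover have "P ! 1 \<in> T" using T(3) len by (simp add: subset_iff)
    ultimately show ?thesis using ends by auto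
  qed
  moreover have "x \<in> T" "y \<in> T" using T(3) P(1-3) by auto
  ultimately show ?thesis by (intro that[OF T(1,2)])
qed

lemma common_two_connected_set:
  assumes wf: "wf_graph X" and xy: "x \<noteq> y" "x \<in> verts X"
    and reach: "(x, y) \<in> (edges_on X (verts X))\<^sup>*"
    and no_cut: "\<And>z. z \<in> verts X \<Longrightarrow> z \<noteq> x \<Longrightarrow> z \<noteq> y \<Longrightarrow> (x, y) \<in> (edges_on X (verts X - {z}))\<^sup>*"
    and no_bridge: "adj X x y \<Longrightarrow> \<exists>w. adj X x w \<and> w \<noteq> y \<and> (w, y) \<in> (edges_on X (verts X - {x}))\<^sup>*"
  shows "\<exists>T \<subseteq> verts X. x \<in> T \<and> y \<in> T \<and> two_connected_on X T"
proof -
  obtain T where T: "T \<subseteq> verts X" "robustly_connected_on X T" "x \<in> T" "y \<in> T"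
    and third: "adj X x y \<or> (\<exists>w\<in>T. w \<noteq> x \<and> w \<noteq> y)"
    by (rule robustly_connected_set_joining[OF wf xy reach no_cut])
  obtain T' w where T': "T \<subseteq> T'" "T' \<subseteq> verts X" "robustly_connected_on X T'" "w \<in> T'" "w \<noteq> x" "w \<noteq> y"
  proof (cases "\<exists>w\<in>T. w \<noteq> x \<and> w \<noteq> y")
    case True
    then obtain w where "w \<in> T" "w \<noteq> x" "w \<noteq> y" by blast
    then show ?thesis by (intro that[OF order_refl T(1,2)])
  next
    case False
    then obtain w where w: "adj X x w" "w \<noteq> y" "(w, y) \<in> (edges_on X (verts X - {x}))\<^sup>*"
      using third no_bridge by blast
    have "w \<noteq> x" using w(1) wf by (auto simp: wf_graph_def)
    obtain T' where "T \<subseteq> T'" "T' \<subseteq> verts X" "robustly_connected_on X T'" "w \<in> T'"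
      by (rule robustly_connected_extend[OF wf T(2,1,3) w(1) T(4) xy(1)[symmetric] w(3)])
    then show ?thesis using \<open>w \<noteq> x\<close> w(2) by (intro that)
  qed
  have "finite T'" using T'(2) wf_graph_finite[OF wf] by (rule finite_subset)
  then have "two_connected_on X T'"
    using robustly_connected_imp_two_connected[of T' X x y w] T' T(3,4) xy(1) by auto
  then show ?thesis using T' T(3,4) by blast
qed

lemma two_connected_subset_2cc:
  assumes fin: "finite (verts X)" and T: "T \<subseteq> verts X" "two_connected_on X T"
  obtains S where "is_2cc X S" "T \<subseteq> S"
proof -
  let ?C = "{S. S \<subseteq> verts X \<and> two_connected_on X S}"
  have "finite ?C" using fin by (rule rev_finite_subset[OF finite_Pow_iff[THEN iffD2]]) auto
  then obtain S where S: "S \<in> ?C" "T \<subseteq> S" "\<And>U. U \<in> ?C \<Longrightarrow> S \<subseteq> U \<Longrightarrow> S = U"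
    using finite_has_maximal2[of ?C T] T by auto
  then have "is_2cc X S" by (auto simp: is_2cc_def)
  then show ?thesis using S(2) by (rule that)
qed

lemma two_connected_third_vertex:
  assumes "two_connected_on X S"
  obtains a where "a \<in> S" "a \<noteq> x" "a \<noteq> y"
proof -
  have "\<not> S \<subseteq> {x, y}"
  proof
    assume "S \<subseteq> {x, y}"
    then have "card S \<le> card {x, y}" by (rule card_mono[rotated]) simp
    also have "\<dots> \<le> 2" by (rule card_insert_le_m1) simp_all
    finally show False using assms by (simp add: two_connected_on_def)
  qed
  then show ?thesis using that by blast
qed

lemma two_connected_reachable_avoiding:
  assumes "S \<subseteq> verts X" "two_connected_on X S" "x \<in> S" "y \<in> S" "z \<noteq> x" "z \<noteq> y"
  shows "(x, y) \<in> (edges_on X (verts X - {z}))\<^sup>*"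
proof -
  obtain a where a: "a \<in> S" "a \<noteq> x" "a \<noteq> y" "z \<in> S \<Longrightarrow> a = z"
    using two_connected_third_vertex[OF assms(2), of x y] assms(3-6) by metis
  have "(x, y) \<in> (edges_on X (S - {a}))\<^sup>*"
    using assms(2-4) a by (simp add: two_connected_on_def connected_on_def)
  moreover have "S - {a} \<subseteq> verts X - {z}" using assms(1) a by auto
  ultimately show ?thesis using rtrancl_edges_on_mono by blast
qed

lemma two_connected_reachable:
  assumes "S \<subseteq> verts X" "two_connected_on X S" "x \<in> S" "y \<in> S"
  shows "(x, y) \<in> (edges_on X (verts X))\<^sup>*"
proof -
  obtain a where "a \<in> S" "a \<noteq> x" "a \<noteq> y" by (rule two_connected_third_vertex[OF assms(2)])
  then have "(x, y) \<in> (edges_on X (verts X - {a}))\<^sup>*"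
    using two_connected_reachable_avoiding[OF assms] by blast
  then show ?thesis using rtrancl_edges_on_mono[of "verts X - {a}" "verts X"] by blast
qed

lemma two_connected_edge_detour:
  assumes wf: "wf_graph X" and S: "S \<subseteq> verts X" "two_connected_on X S"
    and xy: "x \<in> S" "y \<in> S" "adj X x y"
  shows "\<exists>w. adj X x w \<and> w \<noteq> y \<and> (w, y) \<in> (edges_on X (verts X - {x}))\<^sup>*"
proof -
  obtain a where a: "a \<in> S" "a \<noteq> x" "a \<noteq> y" by (rule two_connected_third_vertex[OF S(2)])
  have "x \<noteq> y" using wf xy(3) by (auto simp: wf_graph_def)
  then have "(x, a) \<in> (edges_on X (S - {y}))\<^sup>*"
    using S(2) xy(1,2) a by (auto simp: two_connected_on_def connected_on_def)
  then obtain w where w: "(x, w) \<in> edges_on X (S - {y})" using a(2) by (metis converse_rtranclE)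
  then have w': "adj X x w" "w \<in> S" "w \<noteq> y" "w \<noteq> x" using wf by (auto simp: edges_on_def wf_graph_def)
  then have "(w, y) \<in> (edges_on X (verts X - {x}))\<^sup>*"
    using two_connected_reachable_avoiding[OF S w'(2) xy(2), of x] w'(4) \<open>x \<noteq> y\<close> by simp
  with w' show ?thesis by blast
qed

lemma wl_equivalent_no_cut_vertex:
  assumes wf: "wf_graph G" "wf_graph H" and k: "2 \<le> k" and e: "wl_equivalent G H k s s'"
    and no_cut: "\<And>z. z \<noteq> s ! 0 \<Longrightarrow> z \<noteq> s ! 1 \<Longrightarrow> (s ! 0, s ! 1) \<in> (edges_on G (verts G - {z}))\<^sup>*"
    and z': "z' \<in> verts H" "z' \<noteq> s' ! 0" "z' \<noteq> s' ! 1"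
  shows "(s' ! 0, s' ! 1) \<in> (edges_on H (verts H - {z'}))\<^sup>*"
proof -
  have fin: "finite (verts G)" "finite (verts H)" using wf by (simp_all add: wf_graph_finite)
  have len: "length s = k" "length s' = k" using e by (simp_all add: wl_equivalent_def)
  obtain z where z: "z \<in> verts G" "\<And>i. i < k \<Longrightarrow> wl_equivalent G H k (s[i := z]) (s'[i := z'])"
    using wl_equivalent_back[OF fin e z'(1)] by blast
  have e0: "wl_equivalent G H k (s[0 := z]) (s'[0 := z'])"
    and e1: "wl_equivalent G H k (s[1 := z]) (s'[1 := z'])" using z(2) k by simp_all
  have zx: "z \<noteq> s ! 0" using wl_equivalent_eq_iff[OF e1, of 0 1] z'(2) k len by simp
  have zy: "z \<noteq> s ! 1" using wl_equivalent_eq_iff[OF e0, of 0 1] z'(3) k len by simp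
  show ?thesis
  proof (rule rtrancl_edges_on_avoiding_transfer[OF wf zy[symmetric]])
    show "walks_avoiding G {} n (s ! 0) (s ! 1) = walks_avoiding H {} n (s' ! 0) (s' ! 1)" for n
      using wl_equivalent_walks[OF e, of 0 1] k by simp
    show "walks_avoiding G {} n z z = walks_avoiding H {} n z' z'" for n
      using wl_equivalent_closed_walks[OF fin e0 k, of 0] z(1) k len by simp
    show "walks_avoiding G {} n (s ! 0) z = walks_avoiding H {} n (s' ! 0) z'" for n
      using wl_equivalent_walks[OF e1, of 0 1] k len by simp
    show "walks_avoiding G {} n z (s ! 1) = walks_avoiding H {} n z' (s' ! 1)" for n
      using wl_equivalent_walks[OF e0, of 0 1] k len by simp
    show "(s ! 0, s ! 1) \<in> (edges_on G (verts G - {z}))\<^sup>*" using no_cut zx zy by simp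
  qed
qed

lemma wl_equivalent_no_bridge:
  assumes wf: "wf_graph G" "wf_graph H" and k: "2 \<le> k" and e: "wl_equivalent G H k s s'"
    and detour: "adj G (s ! 0) (s ! 1)
      \<Longrightarrow> \<exists>w. adj G (s ! 0) w \<and> w \<noteq> s ! 1 \<and> (w, s ! 1) \<in> (edges_on G (verts G - {s ! 0}))\<^sup>*"
    and adj': "adj H (s' ! 0) (s' ! 1)"
  shows "\<exists>w'. adj H (s' ! 0) w' \<and> w' \<noteq> s' ! 1 \<and> (w', s' ! 1) \<in> (edges_on H (verts H - {s' ! 0}))\<^sup>*"
proof -
  have fin: "finite (verts G)" "finite (verts H)" using wf by (simp_all add: wf_graph_finite)
  have len: "length s = k" "length s' = k" using e by (simp_all add: wl_equivalent_def)
  have xy: "adj G (s ! 0) (s ! 1)" using wl_equivalent_adj_iff[OF e, of 0 1] adj' k by simp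
  then obtain w where w: "adj G (s ! 0) w" "w \<noteq> s ! 1" "(w, s ! 1) \<in> (edges_on G (verts G - {s ! 0}))\<^sup>*"
    using detour by blast
  have V: "w \<in> verts G" "s ! 0 \<in> verts G" "s ! 1 \<noteq> s ! 0" using w(1) xy wf(1) by (auto simp: wf_graph_def)
  obtain w' where w': "\<And>i. i < k \<Longrightarrow> wl_equivalent G H k (s[i := w]) (s'[i := w'])"
    using wl_equivalent_forth[OF fin e V(1)] by blast
  have e0: "wl_equivalent G H k (s[0 := w]) (s'[0 := w'])"
    and e1: "wl_equivalent G H k (s[1 := w]) (s'[1 := w'])" using w' k by simp_all
  have "adj H (s' ! 0) w'" using wl_equivalent_adj_iff[OF e1, of 0 1] w(1) k len by simp
  moreover have "w' \<noteq> s' ! 1" using wl_equivalent_eq_iff[OF e0, of 0 1] w(2) k len by simp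
  moreover have "(w', s' ! 1) \<in> (edges_on H (verts H - {s' ! 0}))\<^sup>*"
  proof (rule rtrancl_edges_on_avoiding_transfer[OF wf V(3) _ _ _ _ w(3)])
    show "walks_avoiding G {} n w (s ! 1) = walks_avoiding H {} n w' (s' ! 1)" for n
      using wl_equivalent_walks[OF e0, of 0 1] k len by simp
    show "walks_avoiding G {} n (s ! 0) (s ! 0) = walks_avoiding H {} n (s' ! 0) (s' ! 0)" for n
      using wl_equivalent_closed_walks[OF fin e k, of 0] V(2) k by simp
    show "walks_avoiding G {} n w (s ! 0) = walks_avoiding H {} n w' (s' ! 0)" for n
      using wl_equivalent_walks[OF e1, of 1 0] k len by simp
    show "walks_avoiding G {} n (s ! 0) (s ! 1) = walks_avoiding H {} n (s' ! 0) (s' ! 1)" for n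
      using wl_equivalent_walks[OF e, of 0 1] k by simp
  qed
  ultimately show ?thesis by blast
qed

lemma wl_equivalent_two_connected_pair:
  assumes wf: "wf_graph G" "wf_graph H" and k: "2 \<le> k" and e: "wl_equivalent G H k s s'"
    and S: "S \<subseteq> verts G" "two_connected_on G S" and s: "s ! 0 \<in> S" "s ! 1 \<in> S" "s ! 0 \<noteq> s ! 1"
    and x': "s' ! 0 \<in> verts H"
  shows "\<exists>T \<subseteq> verts H. s' ! 0 \<in> T \<and> s' ! 1 \<in> T \<and> two_connected_on H T"
proof (rule common_two_connected_set[OF wf(2) _ x'])
  show "s' ! 0 \<noteq> s' ! 1" using wl_equivalent_eq_iff[OF e, of 0 1] s(3) k by simp
  have "(s' ! 0, s' ! 1) \<in> (edges_on H (verts H - {}))\<^sup>*"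
  proof (rule rtrancl_edges_on_transfer[OF wf, where a = "s ! 0" and b = "s ! 1" and Z = "{}"])
    show "walks_avoiding G {} n (s ! 0) (s ! 1) = walks_avoiding H {} n (s' ! 0) (s' ! 1)" for n
      using wl_equivalent_walks[OF e, of 0 1] k by simp
  qed (use two_connected_reachable[OF S s(1,2)] in simp_all)
  then show "(s' ! 0, s' ! 1) \<in> (edges_on H (verts H))\<^sup>*" by simp
  show "(s' ! 0, s' ! 1) \<in> (edges_on H (verts H - {z'}))\<^sup>*"
    if "z' \<in> verts H" "z' \<noteq> s' ! 0" "z' \<noteq> s' ! 1" for z'
    using wl_equivalent_no_cut_vertex[OF wf k e _ that] two_connected_reachable_avoiding[OF S s(1,2)]
    by blast
  show "\<exists>w'. adj H (s' ! 0) w' \<and> w' \<noteq> s' ! 1 \<and> (w', s' ! 1) \<in> (edges_on H (verts H - {s' ! 0}))\<^sup>*"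
    if "adj H (s' ! 0) (s' ! 1)"
    using wl_equivalent_no_bridge[OF wf k e _ that] two_connected_edge_detour[OF wf(1) S s(1,2)] by blast
qed

lemma wl_equivalent_distinct_pebbles:
  assumes wf: "wf_graph G" "wf_graph H" and k: "2 \<le> k" and e: "wl_equivalent G H k t t'"
    and t: "t ! 0 = u" "t ! 1 = v" "t' ! 0 = u'" "t' ! 1 = v'"
    and S: "S \<subseteq> verts G" "two_connected_on G S" "v \<in> S"
  obtains s s' where "wl_equivalent G H k s s'" "s ! 0 = u" "s ! 1 \<in> S" "s ! 1 \<noteq> u"
    "s' ! 0 = u'" "v' \<in> {s' ! 0, s' ! 1}"
proof (cases "u = v")
  case False
  then show ?thesis using that[OF e] t S(3) by simp
next
  case True
  have len: "length t = k" "length t' = k" using e by (simp_all add: wl_equivalent_def)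
  obtain w where w: "w \<in> S" "w \<noteq> u" using two_connected_third_vertex[OF S(2)] by blast
  then obtain w' where "\<forall>i<k. wl_equivalent G H k (t[i := w]) (t'[i := w'])"
    using wl_equivalent_forth[OF wf_graph_finite[OF wf(1)] wf_graph_finite[OF wf(2)] e, of w] S(1) by blast
  then have "wl_equivalent G H k (t[1 := w]) (t'[1 := w'])" using k by simp
  moreover have "u' = v'" using wl_equivalent_eq_iff[OF e, of 0 1] True t k by simp
  ultimately show ?thesis using that[of "t[1 := w]" "t'[1 := w']"] w t k len by simp
qed

lemma wl_pair_eq_imp_two_connected:
  assumes wf: "wf_graph G" "wf_graph H" and k: "2 \<le> k" and eq: "wl_pair G k u v = wl_pair H k u' v'"
    and S: "S \<subseteq> verts G" "two_connected_on G S" "u \<in> S" "v \<in> S" and u': "u' \<in> verts H"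
  shows "\<exists>T \<subseteq> verts H. u' \<in> T \<and> v' \<in> T \<and> two_connected_on H T"
proof -
  let ?t = "u # replicate (k - 1) v" and ?t' = "u' # replicate (k - 1) v'"
  have "wl_equivalent G H k ?t ?t'" using eq k by (simp add: wl_equivalent_def wl_pair_def)
  moreover have "?t ! 0 = u" "?t ! 1 = v" "?t' ! 0 = u'" "?t' ! 1 = v'" using k by (simp_all add: nth_Cons')
  ultimately obtain s s' where s: "wl_equivalent G H k s s'" "s ! 0 = u" "s ! 1 \<in> S" "s ! 1 \<noteq> u"
    and s': "s' ! 0 = u'" "v' \<in> {s' ! 0, s' ! 1}"
    using wl_equivalent_distinct_pebbles[OF wf k _ _ _ _ _ S(1,2,4)] by blast
  have "s ! 0 \<in> S" "s ! 0 \<noteq> s ! 1" "s' ! 0 \<in> verts H" using s S(3) s'(1) u' by auto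
  then obtain T where "T \<subseteq> verts H" "two_connected_on H T" "s' ! 0 \<in> T" "s' ! 1 \<in> T"
    using wl_equivalent_two_connected_pair[OF wf k s(1) S(1,2) _ s(3)] by blast
  then show ?thesis using s' by auto
qed

theorem theorem6:
  fixes G :: "('a, 'c) cgraph" and H :: "('b, 'c) cgraph" and k :: nat
  assumes "k \<ge> 2"
    and "wf_graph G" and "wf_graph H"
    and "\<exists>S. is_2cc G S \<and> u \<in> S \<and> v \<in> S"
    and "u' \<in> verts H" and "v' \<in> verts H"
    and "\<not> (\<exists>S. is_2cc H S \<and> u' \<in> S \<and> v' \<in> S)"
  shows "wl_pair G k u v \<noteq> wl_pair H k u' v'"
proof
  assume eq: "wl_pair G k u v = wl_pair H k u' v'"
  obtain S where S: "S \<subseteq> verts G" "two_connected_on G S" "u \<in> S" "v \<in> S"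
    using assms(4) by (auto simp: is_2cc_def)
  obtain T where T: "T \<subseteq> verts H" "u' \<in> T" "v' \<in> T" "two_connected_on H T"
    using wl_pair_eq_imp_two_connected[OF assms(2,3,1) eq S assms(5)] by blast
  then obtain S' where "is_2cc H S'" "T \<subseteq> S'"
    using two_connected_subset_2cc[OF wf_graph_finite[OF assms(3)]] by blast
  then show False using assms(7) T(2,3) by blast
qed

end
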